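(* Let $\mathcal{M}$ be a set of mappings over a database schema $\Sigma$. Then $\mathcal{M}\equiv\mathrm{split}(\mathcal{M})$.
   Context: A mapping is $L(\vec t) \leftsquigarrow U(\vec x)$ with $L$ a concept or role name, $\vec t$ a tuple of terms over the variables $\vec x$ (built with function symbols, or plain variables), and $U$ a view name whose extension $U^{\mathcal{D}}$ on a database instance $\mathcal{D}$ of $\Sigma$ is given by a query (possibly a non-recursive Datalog query with function symbols, whose answers may be tuples of terms $f(\vec a)$). The virtual ABox is $\mathcal{A}_{(\mathcal{M},\mathcal{D})}=\{L(\vec t\,[\vec x\mapsto\vec a])\mid L(\vec t)\leftsquigarrow U(\vec x)\in\mathcal{M},\ \vec a\in U^{\mathcal{D}}\}$, and $\mathcal{M}\equiv\mathcal{M}'$ means $\mathcal{A}_{(\mathcal{M},\mathcal{D})}=\mathcal{A}_{(\mathcal{M}',\mathcal{D})}$ for every instance $\mathcal{D}$ of $\Sigma$. Split: if $m=L(\vec x)\leftsquigarrow U(\vec x)$ where $U$ is a view name for a non-recursive Datalog query $(U(\vec x),\{U(\vec f_i(\vec x_i))\leftarrow V_i(\vec x_i)\mid 1\le i\le n\})$ (each $V_i(\vec x_i)$ possibly a conjunction of view atoms), then $\mathrm{split}(m)=\{L(\vec f_i(\vec x_i))\leftsquigarrow V_i(\vec x_i)\mid 1\le i\le n\}$; for any mapping $m'$ not of this form, $\mathrm{split}(m')=\{m'\}$. For a set, $\mathrm{split}(\mathcal{M})=\bigcup_{m\in\mathcal{M}}\mathrm{split}(m)$. *)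

theory Defs
  imports Main
begin

text \<open>Ground terms: database values (constants) and function-symbol terms f(a).\<close>
datatype ('f, 'c) gterm = GConst 'c | GFun 'f "('f, 'c) gterm list"

datatype ('f, 'x) oterm = OVar 'x | OFun 'f "('f, 'x) oterm list"

fun inst :: "('x \<Rightarrow> ('f, 'c) gterm) \<Rightarrow> ('f, 'x) oterm \<Rightarrow> ('f, 'c) gterm" where
  "inst \<sigma> (OVar x) = \<sigma> x"
| "inst \<sigma> (OFun f ts) = GFun f (map (inst \<sigma>) ts)"

type_synonym ('v, 'x) vatom = "'v \<times> 'x list"

type_synonym ('v, 'f, 'c) ext = "'v \<Rightarrow> ('f, 'c) gterm list set"

definition sat :: "('v, 'f, 'c) ext \<Rightarrow> ('x \<Rightarrow> ('f, 'c) gterm) \<Rightarrow> ('v, 'x) vatom list \<Rightarrow> bool" where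
  "sat E \<sigma> body \<longleftrightarrow> (\<forall>(V, ys) \<in> set body. map \<sigma> ys \<in> E V)"

text \<open>A Datalog rule U(f(x)) <- V(x): head tuple of terms, body conjunction of view atoms.\<close>
type_synonym ('f, 'x, 'v) rule = "('f, 'x) oterm list \<times> ('v, 'x) vatom list"

definition dl_sem :: "('v, 'f, 'c) ext \<Rightarrow> ('f, 'x, 'v) rule list \<Rightarrow> ('f, 'c) gterm list set" where
  "dl_sem E rs = {map (inst \<sigma>) h | h b \<sigma>. (h, b) \<in> set rs \<and> sat E \<sigma> b}"

text \<open>A schema with views: each view name is either a base view (None) or defined by a
  Datalog query given by its list of rules (Some rs).\<close>
type_synonym ('v, 'f, 'x) viewdefs = "'v \<Rightarrow> ('f, 'x, 'v) rule list option"

definition nonrecursive :: "('v, 'f, 'x) viewdefs \<Rightarrow> bool" where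
  "nonrecursive defs \<longleftrightarrow>
     wf {(V, U). \<exists>rs h b ys. defs U = Some rs \<and> (h, b) \<in> set rs \<and> (V, ys) \<in> set b}"

definition is_instance :: "('v, 'f, 'x) viewdefs \<Rightarrow> ('v, 'f, 'c) ext \<Rightarrow> bool" where
  "is_instance defs E \<longleftrightarrow> (\<forall>U rs. defs U = Some rs \<longrightarrow> E U = dl_sem E rs)"

text \<open>A mapping L(t) ~> source, source a conjunction of view atoms (a single atom U(x) in
  the basic case).\<close>
type_synonym ('l, 'f, 'x, 'v) mapping = "'l \<times> ('f, 'x) oterm list \<times> ('v, 'x) vatom list"

definition vabox :: "('v, 'f, 'c) ext \<Rightarrow> ('l, 'f, 'x, 'v) mapping set \<Rightarrow> ('l \<times> ('f, 'c) gterm list) set" where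
  "vabox E M = {(L, map (inst \<sigma>) t) | L t b \<sigma>. (L, t, b) \<in> M \<and> sat E \<sigma> b}"

text \<open>M == M': same virtual ABox on every instance; the type of database values 'c is
  passed explicitly.\<close>
definition mapping_equiv :: "'c itself \<Rightarrow>
  ('v, 'f, 'x) viewdefs \<Rightarrow> ('l, 'f, 'x, 'v) mapping set \<Rightarrow> ('l, 'f, 'x, 'v) mapping set \<Rightarrow> bool" where
  "mapping_equiv (_ :: 'c itself) defs M M' \<longleftrightarrow>
     (\<forall>E :: ('v, 'f, 'c) ext. is_instance defs E \<longrightarrow> vabox E M = vabox E M')"

text \<open>split on a single mapping: L(x) ~> U(x) with U defined by a Datalog query
  (x a tuple of distinct variables matching the arity of the rule heads) is replaced by
  the mappings L(f_i(x_i)) ~> V_i(x_i); any other mapping is kept.\<close>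
fun split_m :: "('v, 'f, 'x) viewdefs \<Rightarrow> ('l, 'f, 'x, 'v) mapping \<Rightarrow> ('l, 'f, 'x, 'v) mapping set" where
  "split_m defs (L, t, [(U, xs)]) =
     (case defs U of
        Some rs \<Rightarrow>
          (if t = map OVar xs \<and> distinct xs \<and> (\<forall>(h, b) \<in> set rs. length h = length xs)
           then {(L, h, b) | h b. (h, b) \<in> set rs}
           else {(L, t, [(U, xs)])})
      | None \<Rightarrow> {(L, t, [(U, xs)])})"
| "split_m defs m = {m}"

definition split :: "('v, 'f, 'x) viewdefs \<Rightarrow> ('l, 'f, 'x, 'v) mapping set \<Rightarrow> ('l, 'f, 'x, 'v) mapping set" where
  "split defs M = (\<Union>m \<in> M. split_m defs m)"

end

theory Submission
  imports Defs
begin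

text \<open>The virtual ABox is a union over the mappings, so it suffices that the split of a single
  mapping L(x) \<leadsto> U(x) has the same virtual ABox as the mapping itself: an answer of the
  Datalog query defining U is exactly an instantiated head f_i(x_i) of one of its rules with a
  satisfied body V_i(x_i), while, x being a tuple of distinct variables, every tuple of the
  right length in the extension of U is reached by some assignment of x.\<close>

lemma map_the_map_of_zip:
  assumes "distinct xs" "length v = length xs"
  shows "map (\<lambda>x. the (map_of (zip xs v) x)) xs = v"
  by (rule nth_equalityI) (use assms in \<open>auto simp: map_of_zip_nth\<close>)

lemma sat_single: "sat E \<sigma> [(U, xs)] \<longleftrightarrow> map \<sigma> xs \<in> E U"
  by (simp add: sat_def)

lemma inst_comp_OVar: "inst \<sigma> \<circ> OVar = \<sigma>"
  by (rule ext) simp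

lemma vabox_UN: "vabox E (\<Union>m\<in>M. S m) = (\<Union>m\<in>M. vabox E (S m))"
  unfolding vabox_def by blast

lemma vabox_eq_UN_singletons: "vabox E M = (\<Union>m\<in>M. vabox E {m})"
  unfolding vabox_def by blast

lemma vabox_rules: "vabox E {(L, h, b) | h b. (h, b) \<in> set rs} = {(L, v) | v. v \<in> dl_sem E rs}"
  unfolding vabox_def dl_sem_def by blast

lemma vabox_view_atom:
  assumes "distinct xs" and "\<forall>v \<in> E U. length v = length xs"
  shows "vabox E {(L, map OVar xs, [(U, xs)])} = {(L, v) | v. v \<in> E U}"
proof -
  have "vabox E {(L, map OVar xs, [(U, xs)])} = {(L, map \<sigma> xs) | \<sigma>. map \<sigma> xs \<in> E U}"
    unfolding vabox_def by (simp add: sat_single inst_comp_OVar)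
  also have "\<dots> = {(L, v) | v. v \<in> E U}"
  proof (intro equalityI subsetI)
    fix p assume "p \<in> {(L, v) | v. v \<in> E U}"
    then obtain v where p: "p = (L, v)" and v: "v \<in> E U" by blast
    define \<sigma> where "\<sigma> = (\<lambda>x. the (map_of (zip xs v) x))"
    have "map \<sigma> xs = v" unfolding \<sigma>_def using map_the_map_of_zip assms v by blast
    with p v have "p = (L, map \<sigma> xs)" "map \<sigma> xs \<in> E U" by simp_all
    then show "p \<in> {(L, map \<sigma> xs) | \<sigma>. map \<sigma> xs \<in> E U}" by blast
  qed blast
  finally show ?thesis .
qed

lemma dl_sem_length:
  assumes "\<forall>(h, b) \<in> set rs. length h = n"
  shows "\<forall>v \<in> dl_sem E rs. length v = n"
  using assms unfolding dl_sem_def by auto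

lemma vabox_split_m:
  assumes "is_instance defs E"
  shows "vabox E (split_m defs m) = vabox E {m}"
  using assms
proof (induction defs m rule: split_m.induct)
  case (1 defs L t U xs)
  show ?case
  proof (cases "defs U")
    case (Some rs)
    show ?thesis
    proof (cases "t = map OVar xs \<and> distinct xs \<and> (\<forall>(h, b) \<in> set rs. length h = length xs)")
      case True
      have EU: "E U = dl_sem E rs" using "1.prems" Some unfolding is_instance_def by blast
      have "vabox E {(L, map OVar xs, [(U, xs)])} = {(L, v) | v. v \<in> E U}"
        using True dl_sem_length[of rs "length xs" E] by (intro vabox_view_atom) (simp_all add: EU)
      with True Some show ?thesis by (simp add: vabox_rules EU)
    next
      case False
      with Some show ?thesis by (simp only: split_m.simps option.case if_False)
    qed
  qed simp
qed simp_all

theorem corollary1: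
  fixes defs :: "('v, 'f, 'x) viewdefs"
    and M :: "('l, 'f, 'x, 'v) mapping set"
  assumes "nonrecursive defs"
  shows "mapping_equiv TYPE('c) defs M (split defs M)"
  unfolding mapping_equiv_def split_def
proof (intro allI impI)
  fix E :: "('v, 'f, 'c) ext"
  assume "is_instance defs E"
  then show "vabox E M = vabox E (\<Union>m\<in>M. split_m defs m)"
    by (simp add: vabox_UN vabox_split_m flip: vabox_eq_UN_singletons)
qed

end
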